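(* Assume that for every $t$ the local noises $w^1_t,\ldots,w^n_t$ are exchangeable. Then the optimal strategy (minimizing $J(g)$ over all strategies $g$) is characterized by the Bellman equation on the planning space $\mathcal{M}(n)\times\{0,1,2,\ldots\}$: for all $x\in\mathcal{M}(n)$ and $y\in\{0,1,2,\ldots\}$, $$V(x,y)=\min_{a\in\{0,1\}}\Big(\hat c(x,y,a)+\gamma\,\mathbb{E}\big[V(\hat f(x,y,o))\big]\Big),$$ where the expectation is over $o\in\mathcal{O}$ with distribution $$\mathbb{P}(o\mid x,y,a)=(1-aq)\,\mathbb{1}\{o=\mathtt{blank}\}+a\,q\,T_{\mathsf m}^{y+1}(o,x)\,\mathbb{1}\{o\neq\mathtt{blank}\};$$ i.e. the strategy which at every time $t$ selects an action attaining the minimum at $(x_t,y_t)$ is optimal.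
   Context: Setting: $n\in\mathbb{N}$ nodes, finite state set $\mathcal{S}\subset\mathbb{R}$, finite noise set $\mathcal{W}\subset\mathbb{R}$, time $t\in\mathbb{N}=\{1,2,\ldots\}$. Node $i$ has state $s^i_t\in\mathcal{S}$; the empirical distribution is $m_t(s)=\frac1n\sum_{i=1}^n\mathbb{1}\{s^i_t=s\}$, taking values in $\mathcal{M}(n)$, the set of probability vectors on $\mathcal{S}$ whose entries lie in $\{0,\frac1n,\ldots,1\}$. States evolve as $s^i_{t+1}=f(s^i_t,m_t,w^i_t)$ with local noise $w^i_t\in\mathcal{W}$. A decision maker picks $a_t\in\{0,1\}$ ($1$ = collect data). Observations $o_t\in\mathcal{O}=\mathcal{M}(n)\cup\{\mathtt{blank}\}$: $o_1=m_1$; if $a_t=0$ then $o_{t+1}=\mathtt{blank}$; if $a_t=1$ then $o_{t+1}=m_{t+1}$ with probability $q\in[0,1]$ (credible data) and $o_{t+1}=\mathtt{blank}$ with probability $1-q$. A strategy is $g=(g_1,g_2,\ldots)$ with $a_t=g_t(o_{1:t},a_{1:t-1})$. The initial states, noise vectors $(w^1_t,\ldots,w^n_t)$, $t\in\mathbb{N}$, and the Bernoulli($q$) credibility variables are mutually independent with finite variances. The estimate is $\hat m_t=h(\mathbb{P}(m_t\mid o_{1:t},a_{1:t-1}))\in\mathcal{M}(n)$ for a fixed function $h$ from probability distributions on $\mathcal{M}(n)$ to $\mathcal{M}(n)$. Per-step cost $c:\mathcal{M}(n)^2\times\{0,1\}\to\mathbb{R}_{\ge0}$ evaluated at $(m_t,\hat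 m_t,a_t)$; discount $\gamma\in(0,1)$; $J(g)=\mathbb{E}^g[\sum_{t=1}^\infty\gamma^{t-1}c(m_t,\hat m_t,a_t)]$. Under exchangeable noises $m_t$ is a (time-homogeneous) Markov chain with transition matrix $T_{\mathsf m}(m',m)=\mathbb{P}(m_{t+1}=m'\mid m_t=m)$; $T_{\mathsf m}^y$ is its $y$-th power and $T_{\mathsf m}^y(\cdot,x)$ the distribution after $y$ steps from $x$. $x_t$ denotes the last non-blank observation up to time $t$ and $y_t$ the number of blank observations since then, $(x_1,y_1)=(m_1,0)$, with $(x_{t+1},y_{t+1})=\hat f(x_t,y_t,o_{t+1})$ where $\hat f(x,y,o)=(x,y+1)$ if $o=\mathtt{blank}$ and $\hat f(x,y,o)=(o,0)$ otherwise. Define $\hat c(x,y,a)=\sum_{m\in\mathcal{M}(n)}c\big(m,h(T_{\mathsf m}^{y}(\cdot,x)),a\big)\,T_{\mathsf m}^{y}(m,x)$. *)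

theory Defs
  imports "HOL-Probability.Probability" "HOL-Combinatorics.Permutations"
begin

text \<open>Empirical distributions are functions real => real (supported in S);
observations are options (None = blank); actions are bool (True = collect data).
Nodes are indexed 0..n-1; state and noise vectors are functions nat => real.\<close>

type_synonym mf = "real \<Rightarrow> real"
type_synonym obs = "mf option"
type_synonym hist = "((nat \<Rightarrow> real) \<times> obs \<times> bool) list"
type_synonym strategy = "nat \<Rightarrow> obs list \<Rightarrow> bool list \<Rightarrow> bool"

definition emp :: "nat \<Rightarrow> (nat \<Rightarrow> real) \<Rightarrow> mf" where
  "emp n s = (\<lambda>x. real (card {i. i < n \<and> s i = x}) / real n)"

definition Mn :: "nat \<Rightarrow> real set \<Rightarrow> mf set" where
  "Mn n S = {m. (\<forall>x. x \<notin> S \<longrightarrow> m x = 0)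
              \<and> (\<forall>x\<in>S. \<exists>k::nat. k \<le> n \<and> m x = real k / real n)
              \<and> (\<Sum>x\<in>S. m x) = 1}"

definition exchangeable :: "nat \<Rightarrow> (nat \<Rightarrow> real) pmf \<Rightarrow> bool" where
  "exchangeable n p \<longleftrightarrow> (\<forall>\<pi>. \<pi> permutes {..<n} \<longrightarrow> map_pmf (\<lambda>w. w \<circ> \<pi>) p = p)"

definition obs_of :: "hist \<Rightarrow> obs list" where
  "obs_of hs = map (\<lambda>e. fst (snd e)) hs"

definition acts_of :: "hist \<Rightarrow> bool list" where
  "acts_of hs = map (\<lambda>e. snd (snd e)) hs"

text \<open>One step: history up to time t (length t), noise w, credibility bit b.
New entry is time t+1.\<close>
definition ext_hist :: "nat \<Rightarrow> (real \<Rightarrow> mf \<Rightarrow> real \<Rightarrow> real) \<Rightarrow> strategy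
    \<Rightarrow> hist \<Rightarrow> (nat \<Rightarrow> real) \<Rightarrow> bool \<Rightarrow> hist" where
  "ext_hist n f g hs w b =
     (let s = fst (last hs); a = snd (snd (last hs));
          s' = (\<lambda>i. f (s i) (emp n s) (w i));
          ob' = (if a \<and> b then Some (emp n s') else None)
      in hs @ [(s', ob', g (Suc (length hs)) (obs_of hs @ [ob']) (acts_of hs))])"

text \<open>traj ... g k = joint law of the history up to time k+1 under strategy g.\<close>
fun traj :: "nat \<Rightarrow> (real \<Rightarrow> mf \<Rightarrow> real \<Rightarrow> real) \<Rightarrow> (nat \<Rightarrow> real) pmf \<Rightarrow> (nat \<Rightarrow> real) pmf
    \<Rightarrow> real \<Rightarrow> strategy \<Rightarrow> nat \<Rightarrow> hist pmf" where
  "traj n f init noise q g 0 =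
     map_pmf (\<lambda>s. [(s, Some (emp n s), g 1 [Some (emp n s)] [])]) init"
| "traj n f init noise q g (Suc k) =
     bind_pmf (traj n f init noise q g k) (\<lambda>hs.
       bind_pmf noise (\<lambda>w. map_pmf (\<lambda>b. ext_hist n f g hs w b) (bernoulli_pmf q)))"

text \<open>Conditional law of m_t given o_{1:t}, a_{1:t-1} (those of the history hs).\<close>
definition belief :: "nat \<Rightarrow> hist pmf \<Rightarrow> hist \<Rightarrow> mf pmf" where
  "belief n P hs = map_pmf (\<lambda>hs'. emp n (fst (last hs')))
     (cond_pmf P {hs'. obs_of hs' = obs_of hs \<and> butlast (acts_of hs') = butlast (acts_of hs)})"

definition J :: "nat \<Rightarrow> (real \<Rightarrow> mf \<Rightarrow> real \<Rightarrow> real) \<Rightarrow> (nat \<Rightarrow> real) pmf \<Rightarrow> (nat \<Rightarrow> real) pmf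
    \<Rightarrow> real \<Rightarrow> (mf pmf \<Rightarrow> mf) \<Rightarrow> (mf \<Rightarrow> mf \<Rightarrow> bool \<Rightarrow> real) \<Rightarrow> real \<Rightarrow> strategy \<Rightarrow> real" where
  "J n f init noise q h c \<gamma> g =
     (\<Sum>k. \<gamma> ^ k * measure_pmf.expectation (traj n f init noise q g k)
        (\<lambda>hs. c (emp n (fst (last hs))) (h (belief n (traj n f init noise q g k) hs))
               (snd (snd (last hs)))))"

text \<open>Transition matrix of the empirical distribution: from m, pick any state
configuration with empirical distribution m (well-defined under exchangeability).\<close>
definition rep :: "nat \<Rightarrow> real set \<Rightarrow> mf \<Rightarrow> nat \<Rightarrow> real" where
  "rep n S m = (SOME s. (\<forall>i<n. s i \<in> S) \<and> emp n s = m)"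

definition Tstep :: "nat \<Rightarrow> real set \<Rightarrow> (real \<Rightarrow> mf \<Rightarrow> real \<Rightarrow> real) \<Rightarrow> (nat \<Rightarrow> real) pmf
    \<Rightarrow> mf \<Rightarrow> mf pmf" where
  "Tstep n S f noise m = map_pmf (\<lambda>w. emp n (\<lambda>i. f (rep n S m i) m (w i))) noise"

text \<open>Tpow ... y x = T_m^y(., x); so T_m^y(m, x) = pmf (Tpow ... y x) m.\<close>
fun Tpow :: "nat \<Rightarrow> real set \<Rightarrow> (real \<Rightarrow> mf \<Rightarrow> real \<Rightarrow> real) \<Rightarrow> (nat \<Rightarrow> real) pmf
    \<Rightarrow> nat \<Rightarrow> mf \<Rightarrow> mf pmf" where
  "Tpow n S f noise 0 x = return_pmf x"
| "Tpow n S f noise (Suc y) x = bind_pmf (Tpow n S f noise y x) (Tstep n S f noise)"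

definition chat :: "nat \<Rightarrow> real set \<Rightarrow> (real \<Rightarrow> mf \<Rightarrow> real \<Rightarrow> real) \<Rightarrow> (nat \<Rightarrow> real) pmf
    \<Rightarrow> (mf pmf \<Rightarrow> mf) \<Rightarrow> (mf \<Rightarrow> mf \<Rightarrow> bool \<Rightarrow> real) \<Rightarrow> mf \<Rightarrow> nat \<Rightarrow> bool \<Rightarrow> real" where
  "chat n S f noise h c x y a =
     (\<Sum>m\<in>Mn n S. c m (h (Tpow n S f noise y x)) a * pmf (Tpow n S f noise y x) m)"

definition fhat :: "mf \<Rightarrow> nat \<Rightarrow> obs \<Rightarrow> mf \<times> nat" where
  "fhat x y ob = (case ob of None \<Rightarrow> (x, Suc y) | Some m \<Rightarrow> (m, 0))"

definition xy :: "obs list \<Rightarrow> mf \<times> nat" where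
  "xy os = foldl (\<lambda>p ob. fhat (fst p) (snd p) ob) (the (hd os), 0) (tl os)"

definition obsprob :: "nat \<Rightarrow> real set \<Rightarrow> (real \<Rightarrow> mf \<Rightarrow> real \<Rightarrow> real) \<Rightarrow> (nat \<Rightarrow> real) pmf
    \<Rightarrow> real \<Rightarrow> mf \<Rightarrow> nat \<Rightarrow> bool \<Rightarrow> obs \<Rightarrow> real" where
  "obsprob n S f noise q x y a ob =
     (1 - of_bool a * q) * of_bool (ob = None)
     + of_bool a * q * (case ob of None \<Rightarrow> 0 | Some m \<Rightarrow> pmf (Tpow n S f noise (Suc y) x) m)"

definition Qval :: "nat \<Rightarrow> real set \<Rightarrow> (real \<Rightarrow> mf \<Rightarrow> real \<Rightarrow> real) \<Rightarrow> (nat \<Rightarrow> real) pmf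
    \<Rightarrow> real \<Rightarrow> (mf pmf \<Rightarrow> mf) \<Rightarrow> (mf \<Rightarrow> mf \<Rightarrow> bool \<Rightarrow> real) \<Rightarrow> real
    \<Rightarrow> (mf \<Rightarrow> nat \<Rightarrow> real) \<Rightarrow> mf \<Rightarrow> nat \<Rightarrow> bool \<Rightarrow> real" where
  "Qval n S f noise q h c \<gamma> V x y a =
     chat n S f noise h c x y a
     + \<gamma> * (\<Sum>ob\<in>insert None (Some ` Mn n S).
              obsprob n S f noise q x y a ob * case_prod V (fhat x y ob))"

definition bellman :: "nat \<Rightarrow> real set \<Rightarrow> (real \<Rightarrow> mf \<Rightarrow> real \<Rightarrow> real) \<Rightarrow> (nat \<Rightarrow> real) pmf
    \<Rightarrow> real \<Rightarrow> (mf pmf \<Rightarrow> mf) \<Rightarrow> (mf \<Rightarrow> mf \<Rightarrow> bool \<Rightarrow> real) \<Rightarrow> real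
    \<Rightarrow> (mf \<Rightarrow> nat \<Rightarrow> real) \<Rightarrow> bool" where
  "bellman n S f noise q h c \<gamma> V \<longleftrightarrow>
     (\<forall>x\<in>Mn n S. \<forall>y. V x y = min (Qval n S f noise q h c \<gamma> V x y False)
                                 (Qval n S f noise q h c \<gamma> V x y True))"

definition bounded_V :: "nat \<Rightarrow> real set \<Rightarrow> (mf \<Rightarrow> nat \<Rightarrow> real) \<Rightarrow> bool" where
  "bounded_V n S V \<longleftrightarrow> (\<exists>B. \<forall>x\<in>Mn n S. \<forall>y. \<bar>V x y\<bar> \<le> B)"

end

theory Submission
  imports Defs
begin

text \<open>
  Under exchangeable noises, the law of the next empirical distribution depends on the current
  configuration only through its empirical distribution, so m_t is a Markov chain with kernel T.
  By induction on t, the joint law of the information (o_{1:t}, a_{1:t}) and of m_t factors, for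
  every strategy, into the law of the information followed by m_t ~ T^{y_t}(., x_t). Hence the
  belief is T^{y_t}(., x_t), the expected cost at time t is the expectation of
  chat(x_t, y_t, a_t), and the next observation has the law P(o | x_t, y_t, a_t): the problem is a
  Markov decision problem on the planning states (x, y).

  With bounded costs the Bellman operator is a gamma-contraction in the sup norm, so value
  iteration converges to a bounded solution V. For every strategy g,
  E V(x_t, y_t) <= E chat(x_t, y_t, a_t) + gamma E V(x_{t+1}, y_{t+1}), with equality for a
  strategy that always picks a minimising action; unrolling and letting the horizon tend to
  infinity gives J(g*) = E V(x_1, 0) <= J(g).
\<close>

section \<open>Empirical distributions\<close>

lemma sum_card_fibers:
  assumes "finite A" "finite S" "s ` A \<subseteq> S"
  shows "(\<Sum>x\<in>S. card {i\<in>A. s i = x}) = card A"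
proof -
  have "A = (\<Union>x\<in>S. {i\<in>A. s i = x})" using assms by auto
  also have "card \<dots> = (\<Sum>x\<in>S. card {i\<in>A. s i = x})"
    by (rule card_UN_disjoint) (use assms in auto)
  finally show ?thesis by simp
qed

lemma emp_in_Mn:
  assumes "n \<ge> 1" "finite S" "\<forall>i<n. s i \<in> S"
  shows "emp n s \<in> Mn n S"
proof -
  have "{i\<in>{..<n}. s i = x} = {i. i < n \<and> s i = x}" for x by auto
  hence "(\<Sum>x\<in>S. card {i. i < n \<and> s i = x}) = n"
    using sum_card_fibers[of "{..<n}" S s] assms by auto
  hence "(\<Sum>x\<in>S. real (card {i. i < n \<and> s i = x})) = real n"
    by (metis of_nat_sum)
  hence "(\<Sum>x\<in>S. emp n s x) = 1"
    unfolding emp_def using assms(1) by (simp add: sum_divide_distrib[symmetric])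
  moreover have "emp n s x = 0" if "x \<notin> S" for x
    using that assms(3) unfolding emp_def by auto
  moreover have "card {i. i < n \<and> s i = x} \<le> n" for x
    using card_mono[of "{..<n}" "{i. i < n \<and> s i = x}"] by auto
  ultimately show ?thesis unfolding Mn_def emp_def by blast
qed

lemma finite_Mn: "finite S \<Longrightarrow> finite (Mn n S)"
proof -
  assume "finite S"
  have "Mn n S \<subseteq> {m. \<forall>x. (x \<in> S \<longrightarrow> m x \<in> (\<lambda>k. real k / real n) ` {..n}) \<and> (x \<notin> S \<longrightarrow> m x = 0)}"
    unfolding Mn_def by auto
  moreover have "finite \<dots>" by (rule finite_set_of_finite_funs) (use \<open>finite S\<close> in auto)
  ultimately show ?thesis by (rule finite_subset)
qed

lemma card_nth_eq_count_mset: "card {i. i < length xs \<and> xs ! i = x} = count (mset xs) x"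
  by (simp add: count_mset count_list_eq_length_filter length_filter_conv_card eq_commute)

lemma Mn_imp_ex_emp_eq:
  assumes "n \<ge> 1" "finite S" "m \<in> Mn n S"
  shows "\<exists>s. (\<forall>i<n. s i \<in> S) \<and> emp n s = m"
proof -
  from assms(3) have zero: "\<And>x. x \<notin> S \<Longrightarrow> m x = 0"
    and "\<forall>x\<in>S. \<exists>k::nat. k \<le> n \<and> m x = real k / real n"
    and sum_one: "(\<Sum>x\<in>S. m x) = 1" unfolding Mn_def by auto
  then obtain k where k: "\<And>x. x \<in> S \<Longrightarrow> m x = real (k x) / real n"
    by metis
  \<comment> \<open>list every state x in S with multiplicity n m(x)\<close>
  define K where "K = (\<Sum>x\<in>S. replicate_mset (k x) x)"
  obtain xs where xs: "mset xs = K" using ex_mset by blast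
  have count_K: "count K y = (if y \<in> S then k y else 0)" for y
    unfolding K_def using assms(2) by (induction S rule: finite_induct) auto
  have "size K = (\<Sum>x\<in>S. k x)"
    unfolding K_def using assms(2) by (induction S rule: finite_induct) auto
  moreover have "real (\<Sum>x\<in>S. k x) = real n"
  proof -
    have "(\<Sum>x\<in>S. real (k x)) / real n = 1"
      using sum_one k by (simp add: sum_divide_distrib)
    thus ?thesis using assms(1) by simp
  qed
  ultimately have len: "length xs = n" using xs by (metis of_nat_eq_iff size_mset)
  have "set xs \<subseteq> S" using xs count_K
    by (metis count_eq_zero_iff in_multiset_in_set subsetI)
  hence "\<forall>i<n. xs ! i \<in> S" using len by auto
  moreover have "emp n ((!) xs) = m"
  proof
    fix x
    have "emp n ((!) xs) x = real (count K x) / real n"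
      unfolding emp_def using card_nth_eq_count_mset[of xs x] len xs by simp
    also have "\<dots> = m x" using count_K k zero by auto
    finally show "emp n ((!) xs) x = m x" .
  qed
  ultimately show ?thesis by blast
qed

lemma emp_eq_imp_mset_eq:
  assumes "emp n s = emp n s'"
  shows "mset (map s [0..<n]) = mset (map s' [0..<n])"
proof (rule multiset_eqI)
  fix x
  have count: "count (mset (map t [0..<n])) x = card {i. i < n \<and> t i = x}"
    for t :: "nat \<Rightarrow> real"
    using card_nth_eq_count_mset[of "map t [0..<n]" x] by (simp add: conj_commute cong: conj_cong)
  have "real (card {i. i < n \<and> s i = x}) = real (card {i. i < n \<and> s' i = x})"
    using fun_cong[OF assms, of x] unfolding emp_def by (cases "n = 0") auto
  thus "count (mset (map s [0..<n])) x = count (mset (map s' [0..<n])) x"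
    unfolding count by simp
qed

lemma emp_eq_imp_permutes:
  assumes "emp n s = emp n s'"
  shows "\<exists>\<pi>. \<pi> permutes {..<n} \<and> (\<forall>i<n. s' i = s (\<pi> i))"
proof -
  obtain \<pi> where \<pi>: "\<pi> permutes {..<length (map s [0..<n])}"
    "permute_list \<pi> (map s [0..<n]) = map s' [0..<n]"
    using emp_eq_imp_mset_eq[OF assms] by (metis mset_eq_permutation)
  have "s' i = s (\<pi> i)" if i: "i < n" for i
  proof -
    have "s' i = permute_list \<pi> (map s [0..<n]) ! i" using \<pi>(2) i by simp
    also have "\<dots> = map s [0..<n] ! \<pi> i" by (rule permute_list_nth) (use \<pi> i in auto)
    also have "\<dots> = s (\<pi> i)" using permutes_in_image[OF \<pi>(1)] i by simp
    finally show ?thesis .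
  qed
  thus ?thesis using \<pi>(1) by auto
qed

lemma emp_comp_permutes:
  assumes "\<pi> permutes {..<n}"
  shows "emp n (s \<circ> \<pi>) = emp n s"
proof
  fix x
  have "{i. i < n \<and> s (\<pi> i) = x} = \<pi> -` {i. i < n \<and> s i = x}"
    using permutes_in_image[OF assms] by auto
  hence "card {i. i < n \<and> s (\<pi> i) = x} = card {i. i < n \<and> s i = x}"
    using card_vimage_inj[OF permutes_inj[OF assms], of "{i. i < n \<and> s i = x}"]
      permutes_surj[OF assms] by simp
  thus "emp n (s \<circ> \<pi>) x = emp n s x" unfolding emp_def by simp
qed

lemma emp_cong: "(\<And>i. i < n \<Longrightarrow> s i = s' i) \<Longrightarrow> emp n s = emp n s'"
  unfolding emp_def by (intro ext) (simp cong: conj_cong)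

lemma cond_pmf_cong_support:
  assumes "set_pmf p \<inter> A \<noteq> {}" and "A \<inter> set_pmf p = B \<inter> set_pmf p"
  shows "cond_pmf p A = cond_pmf p B"
proof (rule pmf_eqI)
  fix z
  have neB: "set_pmf p \<inter> B \<noteq> {}" using assms by blast
  have "measure p A = measure p B" by (metis assms(2) measure_Int_set_pmf)
  moreover have "z \<in> set_pmf p \<Longrightarrow> z \<in> A \<longleftrightarrow> z \<in> B" using assms(2) by blast
  ultimately show "pmf (cond_pmf p A) z = pmf (cond_pmf p B) z"
    using set_cond_pmf[OF assms(1)] set_cond_pmf[OF neB]
    by (cases "z \<in> set_pmf p") (auto simp: pmf_cond[OF assms(1)] pmf_cond[OF neB] set_pmf_eq)
qed

lemma pmf_bind_Pair:
  "pmf (bind_pmf Q (\<lambda>u. map_pmf (Pair u) (K u))) (u, m) = pmf Q u * pmf (K u) m"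
proof -
  have "pmf (map_pmf (Pair u') (K u')) (u, m) = pmf (K u) m * indicator {u} u'" for u'
    by (cases "u' = u") (auto simp: pmf_map_inj' inj_on_def pmf_eq_0_set_pmf)
  hence "pmf (bind_pmf Q (\<lambda>u. map_pmf (Pair u) (K u))) (u, m)
      = (\<integral>u'. pmf (K u) m * indicator {u} u' \<partial>measure_pmf Q)"
    unfolding pmf_bind by simp
  also have "\<dots> = pmf Q u * pmf (K u) m" by (simp add: measure_pmf_single)
  finally show ?thesis .
qed

lemma cond_pmf_bind_Pair:
  assumes u0: "u0 \<in> set_pmf Q"
  shows "cond_pmf (bind_pmf Q (\<lambda>u. map_pmf (Pair u) (K u))) ({u0} \<times> UNIV) = map_pmf (Pair u0) (K u0)"
proof (rule pmf_eqI)
  let ?R = "bind_pmf Q (\<lambda>u. map_pmf (Pair u) (K u))"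
  fix z :: "'a \<times> 'b"
  obtain u m where z: "z = (u, m)" by fastforce
  have "map_pmf fst ?R = Q"
    by (simp add: map_bind_pmf pmf.map_comp o_def bind_return_pmf')
  hence "measure ?R ({u0} \<times> UNIV) = pmf Q u0"
    by (metis measure_map_pmf measure_pmf_single vimage_fst)
  moreover obtain m0 where "m0 \<in> set_pmf (K u0)" using set_pmf_not_empty[of "K u0"] by blast
  hence ne: "set_pmf ?R \<inter> ({u0} \<times> UNIV) \<noteq> {}" using u0 by auto
  moreover have "pmf Q u0 > 0" using u0 by (simp add: pmf_positive)
  ultimately show "pmf (cond_pmf ?R ({u0} \<times> UNIV)) z = pmf (map_pmf (Pair u0) (K u0)) z"
    unfolding z pmf_cond[OF ne] pmf_bind_Pair
    by (cases "u = u0") (auto simp: pmf_map_inj' inj_on_def pmf_eq_0_set_pmf)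
qed

lemma expectation_bind_pmf_finite:
  fixes F :: "'b \<Rightarrow> real"
  assumes "finite (set_pmf p)" "\<And>x. x \<in> set_pmf p \<Longrightarrow> finite (set_pmf (K x))"
  shows "measure_pmf.expectation (bind_pmf p K) F
       = measure_pmf.expectation p (\<lambda>x. measure_pmf.expectation (K x) F)"
proof -
  have "measure_pmf.expectation (bind_pmf p K) F
      = (\<Sum>x\<in>set_pmf p. pmf p x *\<^sub>R measure_pmf.expectation (K x) F)"
    by (rule pmf_expectation_bind) (use assms in auto)
  also have "\<dots> = measure_pmf.expectation p (\<lambda>x. measure_pmf.expectation (K x) F)"
    by (subst integral_measure_pmf_real[of "set_pmf p"]) (use assms in \<open>auto simp: mult.commute\<close>)
  finally show ?thesis .
qed

lemma expectation_pmf_cong: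
  fixes F G :: "'a \<Rightarrow> real"
  shows "(\<And>x. x \<in> set_pmf p \<Longrightarrow> F x = G x)
    \<Longrightarrow> measure_pmf.expectation p F = measure_pmf.expectation p G"
  by (rule integral_cong_AE) (auto intro!: AE_pmfI)

lemma abs_expectation_diff_le:
  fixes F G :: "'a \<Rightarrow> real"
  assumes "finite (set_pmf p)" and "\<And>x. x \<in> set_pmf p \<Longrightarrow> \<bar>F x - G x\<bar> \<le> d"
  shows "\<bar>measure_pmf.expectation p F - measure_pmf.expectation p G\<bar> \<le> d"
proof -
  have int: "integrable p H" for H :: "'a \<Rightarrow> real"
    using assms(1) by (rule integrable_measure_pmf_finite)
  have "\<bar>measure_pmf.expectation p F - measure_pmf.expectation p G\<bar>
      = \<bar>measure_pmf.expectation p (\<lambda>x. F x - G x)\<bar>"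
    by (simp add: int)
  also have "\<dots> \<le> measure_pmf.expectation p (\<lambda>x. \<bar>F x - G x\<bar>)"
    by (rule integral_abs_bound)
  also have "\<dots> \<le> d"
    by (rule measure_pmf.integral_le_const) (use int assms(2) in \<open>auto intro!: AE_pmfI\<close>)
  finally show ?thesis .
qed

lemma discounted_unroll_le:
  fixes D C :: "nat \<Rightarrow> real"
  assumes "0 \<le> \<gamma>" and step: "\<And>k. D k \<le> C k + \<gamma> * D (Suc k)"
  shows "D 0 \<le> (\<Sum>k<N. \<gamma> ^ k * C k) + \<gamma> ^ N * D N"
proof (induction N)
  case (Suc N)
  have "\<gamma> ^ N * D N \<le> \<gamma> ^ N * (C N + \<gamma> * D (Suc N))"
    by (rule mult_left_mono[OF step]) (simp add: assms(1))
  thus ?case using Suc.IH by (simp add: ring_distribs mult_ac)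
qed simp

lemma discounted_unroll_eq:
  fixes D C :: "nat \<Rightarrow> real"
  assumes step: "\<And>k. D k = C k + \<gamma> * D (Suc k)"
  shows "D 0 = (\<Sum>k<N. \<gamma> ^ k * C k) + \<gamma> ^ N * D N"
proof (induction N)
  case (Suc N)
  show ?case using Suc.IH step[of N] by (simp add: ring_distribs mult_ac)
qed simp

lemma discounted_unroll_tendsto:
  fixes D C :: "nat \<Rightarrow> real"
  assumes "0 \<le> \<gamma>" "\<gamma> < 1" and "\<And>N. \<bar>D N\<bar> \<le> B" and "\<And>k. 0 \<le> C k" "\<And>k. C k \<le> B'"
  shows "(\<lambda>N. (\<Sum>k<N. \<gamma> ^ k * C k) + \<gamma> ^ N * D N) \<longlonglongrightarrow> (\<Sum>k. \<gamma> ^ k * C k)"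
proof -
  have "summable (\<lambda>k. \<gamma> ^ k * C k)"
    by (rule summable_comparison_test[where g="\<lambda>k. \<gamma> ^ k * B'"])
       (use assms in \<open>auto intro!: summable_mult2 summable_geometric mult_left_mono\<close>)
  moreover have "(\<lambda>N. \<gamma> ^ N * D N) \<longlonglongrightarrow> 0"
  proof (rule Lim_null_comparison)
    show "\<forall>\<^sub>F N in sequentially. norm (\<gamma> ^ N * D N) \<le> \<gamma> ^ N * B"
      using assms(1,3) by (intro always_eventually allI) (simp add: abs_mult mult_left_mono)
    show "(\<lambda>N. \<gamma> ^ N * B) \<longlonglongrightarrow> 0"
      using assms(1,2) by (intro tendsto_mult_left_zero LIMSEQ_power_zero) simp
  qed
  ultimately show ?thesis
    using tendsto_add[OF summable_LIMSEQ] by fastforce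
qed

abbreviation x_of :: "obs list \<times> bool list \<Rightarrow> mf" where "x_of u \<equiv> fst (xy (fst u))"
abbreviation y_of :: "obs list \<times> bool list \<Rightarrow> nat" where "y_of u \<equiv> snd (xy (fst u))"
abbreviation a_of :: "obs list \<times> bool list \<Rightarrow> bool" where "a_of u \<equiv> last (snd u)"

lemma xy_single: "xy [Some e] = (e, 0)"
  by (simp add: xy_def)

lemma xy_snoc: "os \<noteq> [] \<Longrightarrow> xy (os @ [ob]) = fhat (fst (xy os)) (snd (xy os)) ob"
  by (cases os) (simp_all add: xy_def)

definition info_step :: "strategy \<Rightarrow> obs list \<times> bool list \<Rightarrow> obs \<Rightarrow> obs list \<times> bool list" where
  "info_step g u ob = (fst u @ [ob], snd u @ [g (Suc (length (fst u))) (fst u @ [ob]) (snd u)])"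

lemma xy_info_step: "fst u \<noteq> [] \<Longrightarrow> xy (fst (info_step g u ob)) = fhat (x_of u) (y_of u) ob"
  unfolding info_step_def by (simp add: xy_snoc)

(* keeps T^{y+1} folded, the form in which obsprob and Qval mention it *)
declare Tpow.simps(2) [simp del]

locale mean_field_model =
  fixes n :: nat and S W :: "real set"
    and f :: "real \<Rightarrow> mf \<Rightarrow> real \<Rightarrow> real"
    and init noise :: "(nat \<Rightarrow> real) pmf"
    and q \<gamma> :: real
    and h :: "mf pmf \<Rightarrow> mf"
    and c :: "mf \<Rightarrow> mf \<Rightarrow> bool \<Rightarrow> real"
  assumes n_pos: "n \<ge> 1"
    and S_fin: "finite S"
    and f_range: "\<forall>s\<in>S. \<forall>m\<in>Mn n S. \<forall>w\<in>W. f s m w \<in> S"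
    and init_range: "set_pmf init \<subseteq> {s. \<forall>i<n. s i \<in> S}"
    and noise_range: "set_pmf noise \<subseteq> {w. \<forall>i<n. w i \<in> W}"
    and exch: "exchangeable n noise"
    and q_range: "0 \<le> q" "q \<le> 1"
    and \<gamma>_range: "0 \<le> \<gamma>" "\<gamma> < 1"
    and h_range: "\<forall>p. set_pmf p \<subseteq> Mn n S \<longrightarrow> h p \<in> Mn n S"
    and c_nonneg: "\<forall>m\<in>Mn n S. \<forall>m'\<in>Mn n S. \<forall>a. 0 \<le> c m m' a"
begin

abbreviation "Tm \<equiv> Tpow n S f noise"
abbreviation "cost \<equiv> chat n S f noise h c"
abbreviation "Q \<equiv> Qval n S f noise q h c \<gamma>"
abbreviation "hist_law \<equiv> traj n f init noise q"

lemma rep_in_Mn: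
  assumes "x \<in> Mn n S"
  shows "(\<forall>i<n. rep n S x i \<in> S) \<and> emp n (rep n S x) = x"
  unfolding rep_def by (rule someI_ex[OF Mn_imp_ex_emp_eq[OF n_pos S_fin assms]])

text \<open>Exchangeability makes the law of the next empirical distribution independent of the
  configuration chosen to represent the current one.\<close>

lemma law_emp_next_eq_Tstep:
  assumes s: "\<forall>i<n. s i \<in> S"
  shows "map_pmf (\<lambda>w. emp n (\<lambda>i. f (s i) (emp n s) (w i))) noise = Tstep n S f noise (emp n s)"
proof -
  define m where "m = emp n s"
  define s' where "s' = rep n S m"
  have "emp n s = emp n s'"
    using rep_in_Mn[of m] emp_in_Mn[OF n_pos S_fin s] unfolding s'_def m_def by simp
  then obtain \<pi> where \<pi>: "\<pi> permutes {..<n}" "\<forall>i<n. s' i = s (\<pi> i)"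
    using emp_eq_imp_permutes by blast
  define G where "G = (\<lambda>w. emp n (\<lambda>i. f (s i) m (w i)))"
  have "emp n (\<lambda>i. f (s' i) m (w i)) = G (w \<circ> inv \<pi>)" for w
  proof -
    have "emp n (\<lambda>i. f (s' i) m (w i)) = emp n ((\<lambda>i. f (s i) m ((w \<circ> inv \<pi>) i)) \<circ> \<pi>)"
      using \<pi> permutes_inverses(2)[OF \<pi>(1)] by (intro emp_cong) simp
    also have "\<dots> = G (w \<circ> inv \<pi>)" unfolding G_def by (rule emp_comp_permutes[OF \<pi>(1)])
    finally show ?thesis .
  qed
  hence "Tstep n S f noise m = map_pmf G (map_pmf (\<lambda>w. w \<circ> inv \<pi>) noise)"
    unfolding Tstep_def s'_def by (simp add: pmf.map_comp o_def)
  also have "map_pmf (\<lambda>w. w \<circ> inv \<pi>) noise = noise"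
    using exch permutes_inv[OF \<pi>(1)] unfolding exchangeable_def by blast
  finally show ?thesis unfolding G_def m_def ..
qed

lemma set_pmf_Tstep:
  assumes "x \<in> Mn n S"
  shows "set_pmf (Tstep n S f noise x) \<subseteq> Mn n S"
proof
  fix m assume "m \<in> set_pmf (Tstep n S f noise x)"
  then obtain w where w: "w \<in> set_pmf noise" and m: "m = emp n (\<lambda>i. f (rep n S x i) x (w i))"
    unfolding Tstep_def by auto
  have "\<forall>i<n. f (rep n S x i) x (w i) \<in> S"
    using rep_in_Mn[OF assms] w noise_range f_range assms by blast
  thus "m \<in> Mn n S" unfolding m by (rule emp_in_Mn[OF n_pos S_fin])
qed

lemma set_pmf_Tpow: "x \<in> Mn n S \<Longrightarrow> set_pmf (Tm y x) \<subseteq> Mn n S"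
  by (induction y) (use set_pmf_Tstep in \<open>fastforce simp: Tpow.simps(2)\<close>)+

lemma finite_set_pmf_Tpow: "x \<in> Mn n S \<Longrightarrow> finite (set_pmf (Tm y x))"
  using set_pmf_Tpow finite_Mn[OF S_fin] finite_subset by blast

subsection \<open>The Bellman equation\<close>

definition obs_law :: "mf pmf \<Rightarrow> bool \<Rightarrow> obs pmf" where
  "obs_law P a = bind_pmf (bernoulli_pmf q) (\<lambda>b. if a \<and> b then map_pmf Some P else return_pmf None)"

lemma set_pmf_obs_law: "set_pmf (obs_law P a) \<subseteq> insert None (Some ` set_pmf P)"
  unfolding obs_law_def by (auto split: if_splits)

lemma finite_set_pmf_obs_law: "x \<in> Mn n S \<Longrightarrow> finite (set_pmf (obs_law (Tm y' x) a))"
  using set_pmf_obs_law finite_set_pmf_Tpow finite_subset by blast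

lemma fhat_in_Mn:
  assumes "x \<in> Mn n S" "ob \<in> set_pmf (obs_law (Tm y' x) a)"
  shows "fst (fhat x y ob) \<in> Mn n S"
  using assms set_pmf_obs_law[of "Tm y' x" a] set_pmf_Tpow[OF assms(1), of y']
  unfolding fhat_def by (auto split: option.splits)

lemma pmf_obs_law: "pmf (obs_law (Tm (Suc y) x) a) ob = obsprob n S f noise q x y a ob"
proof -
  have "pmf (map_pmf Some P) (Some m) = pmf P m" for P :: "mf pmf" and m
    by (simp add: pmf_map_inj')
  moreover have "pmf (map_pmf Some P) None = 0" for P :: "mf pmf"
    by (simp add: pmf_eq_0_set_pmf)
  ultimately show ?thesis
    unfolding obs_law_def obsprob_def using q_range by (cases a; cases ob) (simp_all add: pmf_bind)
qed

lemma Qval_eq_expectation: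
  assumes "x \<in> Mn n S"
  shows "Q V x y a = cost x y a
    + \<gamma> * measure_pmf.expectation (obs_law (Tm (Suc y) x) a) (\<lambda>ob. case_prod V (fhat x y ob))"
proof -
  let ?O = "insert None (Some ` Mn n S)" and ?F = "\<lambda>ob. case_prod V (fhat x y ob)"
  have "finite ?O" using finite_Mn[OF S_fin] by simp
  moreover have "set_pmf (obs_law (Tm (Suc y) x) a) \<subseteq> ?O"
    using set_pmf_obs_law set_pmf_Tpow[OF assms] by blast
  ultimately have "measure_pmf.expectation (obs_law (Tm (Suc y) x) a) ?F
      = (\<Sum>ob\<in>?O. ?F ob * pmf (obs_law (Tm (Suc y) x) a) ob)"
    by (intro integral_measure_pmf_real) auto
  also have "\<dots> = (\<Sum>ob\<in>?O. obsprob n S f noise q x y a ob * ?F ob)"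
    by (simp only: pmf_obs_law mult.commute)
  finally show ?thesis unfolding Qval_def by simp
qed

lemma chat_eq_expectation:
  assumes "x \<in> Mn n S"
  shows "cost x y a = measure_pmf.expectation (Tm y x) (\<lambda>m. c m (h (Tm y x)) a)"
  unfolding chat_def using finite_Mn[OF S_fin] set_pmf_Tpow[OF assms]
  by (subst integral_measure_pmf_real[where A="Mn n S"]) auto

definition cost_bound :: real where
  "cost_bound = (\<Sum>m\<in>Mn n S. \<Sum>m'\<in>Mn n S. c m m' True + c m m' False)"

lemma c_le_cost_bound:
  assumes "m \<in> Mn n S" "m' \<in> Mn n S"
  shows "c m m' a \<le> cost_bound"
proof -
  have fin: "finite (Mn n S)" using finite_Mn[OF S_fin] .
  have nonneg: "0 \<le> c u v True + c u v False" if "u \<in> Mn n S" "v \<in> Mn n S" for u v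
    using c_nonneg that by simp
  have "c m m' a \<le> c m m' True + c m m' False"
    using c_nonneg assms by (cases a) auto
  also have "\<dots> \<le> (\<Sum>v\<in>Mn n S. c m v True + c m v False)"
    by (rule member_le_sum[OF assms(2) _ fin]) (simp add: nonneg assms(1))
  also have "\<dots> \<le> cost_bound" unfolding cost_bound_def
    by (rule member_le_sum[OF assms(1) _ fin]) (auto intro!: sum_nonneg nonneg)
  finally show ?thesis .
qed

lemma cost_bound_nonneg: "0 \<le> cost_bound"
  unfolding cost_bound_def using c_nonneg by (auto intro!: sum_nonneg add_nonneg_nonneg)

lemma chat_bounds:
  assumes x: "x \<in> Mn n S"
  shows "0 \<le> cost x y a" "cost x y a \<le> cost_bound"
proof -
  have int: "integrable (Tm y x) F" for F :: "mf \<Rightarrow> real"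
    by (rule integrable_measure_pmf_finite[OF finite_set_pmf_Tpow[OF x]])
  have "h (Tm y x) \<in> Mn n S" using h_range set_pmf_Tpow[OF x] by blast
  hence "m \<in> set_pmf (Tm y x) \<Longrightarrow> 0 \<le> c m (h (Tm y x)) a \<and> c m (h (Tm y x)) a \<le> cost_bound" for m
    using set_pmf_Tpow[OF x] c_nonneg c_le_cost_bound by blast
  thus "0 \<le> cost x y a" "cost x y a \<le> cost_bound" unfolding chat_eq_expectation[OF x]
    by (auto intro!: measure_pmf.integral_ge_const measure_pmf.integral_le_const int AE_pmfI)
qed

lemma abs_Qval_diff_le:
  assumes x: "x \<in> Mn n S" and d: "\<forall>x'\<in>Mn n S. \<forall>y'. \<bar>U x' y' - U' x' y'\<bar> \<le> d"
  shows "\<bar>Q U x y a - Q U' x y a\<bar> \<le> \<gamma> * d"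
proof -
  let ?E = "\<lambda>V. measure_pmf.expectation (obs_law (Tm (Suc y) x) a) (\<lambda>ob. case_prod V (fhat x y ob))"
  have "\<bar>?E U - ?E U'\<bar> \<le> d"
    using d fhat_in_Mn[OF x, of _ "Suc y" a y]
    by (intro abs_expectation_diff_le finite_set_pmf_obs_law[OF x]) (simp add: case_prod_beta)
  hence "\<gamma> * \<bar>?E U - ?E U'\<bar> \<le> \<gamma> * d" using \<gamma>_range(1) by (rule mult_left_mono)
  moreover have "Q U x y a - Q U' x y a = \<gamma> * (?E U - ?E U')"
    unfolding Qval_eq_expectation[OF x] by (simp add: right_diff_distrib)
  ultimately show ?thesis using \<gamma>_range(1) by (simp add: abs_mult)
qed

definition bellman_op :: "(mf \<Rightarrow> nat \<Rightarrow> real) \<Rightarrow> mf \<Rightarrow> nat \<Rightarrow> real" where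
  "bellman_op U = (\<lambda>x y. min (Q U x y False) (Q U x y True))"

definition value_iter :: "nat \<Rightarrow> mf \<Rightarrow> nat \<Rightarrow> real" where
  "value_iter N = (bellman_op ^^ N) (\<lambda>_ _. 0)"

lemma value_iter_Suc: "value_iter (Suc N) = bellman_op (value_iter N)"
  unfolding value_iter_def by simp

lemma abs_value_iter_diff_le:
  "\<forall>x\<in>Mn n S. \<forall>y. \<bar>value_iter (Suc N) x y - value_iter N x y\<bar> \<le> \<gamma> ^ N * cost_bound"
proof (induction N)
  case 0
  show ?case
    using chat_bounds
    by (auto simp: value_iter_def bellman_op_def Qval_def min_def)
next
  case (Suc N)
  have min_diff: "\<bar>min a b - min a' b'\<bar> \<le> max \<bar>a - a'\<bar> \<bar>b - b'\<bar>" for a b a' b' :: real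
    by (simp add: min_def max_def abs_if)
  show ?case
  proof (intro ballI allI)
    fix x y assume x: "x \<in> Mn n S"
    have "\<bar>value_iter (Suc (Suc N)) x y - value_iter (Suc N) x y\<bar>
        \<le> max \<bar>Q (value_iter (Suc N)) x y False - Q (value_iter N) x y False\<bar>
              \<bar>Q (value_iter (Suc N)) x y True - Q (value_iter N) x y True\<bar>"
      unfolding value_iter_Suc[of "Suc N"] value_iter_Suc[of N] bellman_op_def by (rule min_diff)
    also have "\<dots> \<le> \<gamma> * (\<gamma> ^ N * cost_bound)"
      using abs_Qval_diff_le[OF x Suc.IH] by simp
    finally show "\<bar>value_iter (Suc (Suc N)) x y - value_iter (Suc N) x y\<bar> \<le> \<gamma> ^ Suc N * cost_bound"
      by simp
  qed
qed

definition value_lim :: "mf \<Rightarrow> nat \<Rightarrow> real" where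
  "value_lim x y = (\<Sum>i. value_iter (Suc i) x y - value_iter i x y)"

lemma value_iter_tendsto: "x \<in> Mn n S \<Longrightarrow> (\<lambda>N. value_iter N x y) \<longlonglongrightarrow> value_lim x y"
proof -
  assume x: "x \<in> Mn n S"
  have "summable (\<lambda>i. value_iter (Suc i) x y - value_iter i x y)"
    by (rule summable_comparison_test[where g="\<lambda>i. \<gamma> ^ i * cost_bound"])
       (use abs_value_iter_diff_le x \<gamma>_range in \<open>auto intro!: summable_mult2 summable_geometric\<close>)
  hence "(\<lambda>N. \<Sum>i<N. value_iter (Suc i) x y - value_iter i x y) \<longlonglongrightarrow> value_lim x y"
    unfolding value_lim_def by (rule summable_LIMSEQ)
  moreover have "(\<Sum>i<N. value_iter (Suc i) x y - value_iter i x y) = value_iter N x y" for N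
    by (subst sum_lessThan_telescope) (simp add: value_iter_def)
  ultimately show ?thesis by simp
qed

lemma abs_value_iter_le: "x \<in> Mn n S \<Longrightarrow> \<bar>value_iter N x y\<bar> \<le> cost_bound / (1 - \<gamma>)"
proof (induction N arbitrary: x y)
  case 0
  show ?case using cost_bound_nonneg \<gamma>_range by (simp add: value_iter_def)
next
  case (Suc N)
  let ?B = "cost_bound / (1 - \<gamma>)"
  have "\<bar>Q (value_iter N) x y a\<bar> \<le> ?B" for a
  proof -
    have "\<bar>Q (value_iter N) x y a - Q (\<lambda>_ _. 0) x y a\<bar> \<le> \<gamma> * ?B"
      using Suc.IH by (intro abs_Qval_diff_le[OF Suc.prems]) simp
    moreover have "Q (\<lambda>_ _. 0) x y a = cost x y a" unfolding Qval_def by simp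
    moreover have "cost_bound + \<gamma> * ?B = ?B" using \<gamma>_range by (simp add: field_simps)
    ultimately show ?thesis using chat_bounds[OF Suc.prems, of y a] by linarith
  qed
  thus ?case unfolding value_iter_Suc bellman_op_def by (simp add: min_def)
qed

lemma bounded_value_lim: "bounded_V n S value_lim"
proof -
  have "\<bar>value_lim x y\<bar> \<le> cost_bound / (1 - \<gamma>)" if "x \<in> Mn n S" for x y
    by (intro LIMSEQ_le_const2[OF tendsto_rabs[OF value_iter_tendsto[OF that]]])
       (use abs_value_iter_le[OF that] in blast)
  thus ?thesis unfolding bounded_V_def by blast
qed

lemma Qval_value_iter_tendsto:
  assumes x: "x \<in> Mn n S"
  shows "(\<lambda>N. Q (value_iter N) x y a) \<longlonglongrightarrow> Q value_lim x y a"
  unfolding Qval_def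
proof (intro tendsto_intros)
  fix ob assume "ob \<in> insert None (Some ` Mn n S)"
  hence "fst (fhat x y ob) \<in> Mn n S" using x unfolding fhat_def by (auto split: option.splits)
  thus "(\<lambda>N. case_prod (value_iter N) (fhat x y ob)) \<longlonglongrightarrow> case_prod value_lim (fhat x y ob)"
    by (simp add: case_prod_beta value_iter_tendsto)
qed

lemma bellman_value_lim: "bellman n S f noise q h c \<gamma> value_lim"
  unfolding bellman_def
proof (intro ballI allI)
  fix x y assume x: "x \<in> Mn n S"
  have "(\<lambda>N. value_iter (Suc N) x y) \<longlonglongrightarrow> value_lim x y"
    using value_iter_tendsto[OF x] by (rule LIMSEQ_Suc)
  moreover have "(\<lambda>N. value_iter (Suc N) x y) \<longlonglongrightarrow> min (Q value_lim x y False) (Q value_lim x y True)"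
    unfolding value_iter_Suc bellman_op_def by (intro tendsto_min Qval_value_iter_tendsto x)
  ultimately show "value_lim x y = min (Q value_lim x y False) (Q value_lim x y True)"
    by (rule LIMSEQ_unique)
qed

subsection \<open>The law of the information state\<close>

text \<open>The law of (o_{1:k+1}, a_{1:k+1}) under g, generated on planning states alone; that it is
  the marginal of hist_law is part of hist_law_info_emp.\<close>

fun info_law :: "strategy \<Rightarrow> nat \<Rightarrow> (obs list \<times> bool list) pmf" where
  "info_law g 0 = map_pmf (\<lambda>s. ([Some (emp n s)], [g 1 [Some (emp n s)] []])) init"
| "info_law g (Suc k) = bind_pmf (info_law g k)
     (\<lambda>u. map_pmf (info_step g u) (obs_law (Tm (Suc (y_of u)) (x_of u)) (a_of u)))"

lemma emp_init_in_Mn: "s \<in> set_pmf init \<Longrightarrow> emp n s \<in> Mn n S"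
  using init_range emp_in_Mn[OF n_pos S_fin] by blast

lemma set_pmf_info_law:
  assumes "u \<in> set_pmf (info_law g k)"
  shows "fst u \<noteq> [] \<and> x_of u \<in> Mn n S \<and> a_of u = g (length (fst u)) (fst u) (butlast (snd u))"
  using assms
proof (induction k arbitrary: u)
  case 0
  thus ?case using emp_init_in_Mn by (auto simp: xy_single)
next
  case (Suc k)
  then obtain u0 ob where u0: "u0 \<in> set_pmf (info_law g k)"
    and ob: "ob \<in> set_pmf (obs_law (Tm (Suc (y_of u0)) (x_of u0)) (a_of u0))"
    and u: "u = info_step g u0 ob" by auto
  have "x_of u \<in> Mn n S"
    unfolding u xy_info_step[OF Suc.IH[OF u0, THEN conjunct1]]
    using fhat_in_Mn Suc.IH[OF u0] ob by blast
  thus ?case unfolding u info_step_def by simp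
qed

lemma info_law_eq_if_fst_eq:
  "u \<in> set_pmf (info_law g k) \<Longrightarrow> u' \<in> set_pmf (info_law g k) \<Longrightarrow> fst u = fst u' \<Longrightarrow> u = u'"
proof (induction k arbitrary: u u')
  case (Suc k)
  from Suc.prems(1) obtain u0 ob where u0: "u0 \<in> set_pmf (info_law g k)" and u: "u = info_step g u0 ob"
    by auto
  from Suc.prems(2) obtain u0' ob' where u0': "u0' \<in> set_pmf (info_law g k)"
    and u': "u' = info_step g u0' ob'" by auto
  from Suc.prems(3) have "fst u0 = fst u0'" "ob = ob'" unfolding u u' info_step_def by simp_all
  thus ?case using Suc.IH[OF u0 u0'] unfolding u u' by simp
qed auto

lemma finite_set_pmf_info_law: "finite (set_pmf (info_law g k))"
proof (induction k)
  case 0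
  have "set_pmf (info_law g 0) \<subseteq> (\<lambda>e. ([Some e], [g 1 [Some e] []])) ` Mn n S"
    using emp_init_in_Mn by auto
  thus ?case using finite_Mn[OF S_fin] finite_subset by blast
next
  case (Suc k)
  thus ?case using set_pmf_info_law finite_set_pmf_obs_law by simp
qed

lemma set_pmf_hist_law:
  "hs \<in> set_pmf (hist_law g k) \<Longrightarrow> hs \<noteq> [] \<and> (\<forall>i<n. fst (last hs) i \<in> S)"
proof (induction k arbitrary: hs)
  case 0
  thus ?case using init_range by auto
next
  case (Suc k)
  then obtain hs0 w b where hs0: "hs0 \<in> set_pmf (hist_law g k)"
    and w: "w \<in> set_pmf noise" and hs: "hs = ext_hist n f g hs0 w b" by auto
  have "emp n (fst (last hs0)) \<in> Mn n S"
    using Suc.IH[OF hs0] emp_in_Mn[OF n_pos S_fin] by blast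
  hence "\<forall>i<n. f (fst (last hs0) i) (emp n (fst (last hs0))) (w i) \<in> S"
    using Suc.IH[OF hs0] w noise_range f_range by blast
  thus ?case unfolding hs ext_hist_def by (simp add: Let_def)
qed

definition info_emp :: "hist \<Rightarrow> (obs list \<times> bool list) \<times> mf" where
  "info_emp hs = ((obs_of hs, acts_of hs), emp n (fst (last hs)))"

definition info_emp_step :: "strategy \<Rightarrow> obs list \<times> bool list \<Rightarrow> mf
    \<Rightarrow> ((obs list \<times> bool list) \<times> mf) pmf" where
  "info_emp_step g u m = bind_pmf (Tstep n S f noise m) (\<lambda>m'. map_pmf
      (\<lambda>b. (info_step g u (if a_of u \<and> b then Some m' else None), m')) (bernoulli_pmf q))"

lemma info_emp_ext_hist:
  assumes hs: "hs \<noteq> []" "\<forall>i<n. fst (last hs) i \<in> S"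
  shows "map_pmf info_emp (bind_pmf noise (\<lambda>w. map_pmf (ext_hist n f g hs w) (bernoulli_pmf q)))
       = info_emp_step g (fst (info_emp hs)) (snd (info_emp hs))"
proof -
  define s where "s = fst (last hs)"
  define E where "E = (\<lambda>w. emp n (\<lambda>i. f (s i) (emp n s) (w i)))"
  define K where "K = (\<lambda>m'. map_pmf (\<lambda>b. (info_step g (obs_of hs, acts_of hs)
      (if last (acts_of hs) \<and> b then Some m' else None), m')) (bernoulli_pmf q))"
  have "last (acts_of hs) = snd (snd (last hs))"
    using hs(1) unfolding acts_of_def by (simp add: last_map)
  hence "info_emp (ext_hist n f g hs w b) = (info_step g (obs_of hs, acts_of hs)
      (if last (acts_of hs) \<and> b then Some (E w) else None), E w)" for w b
    unfolding info_emp_def ext_hist_def info_step_def E_def s_def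
    by (simp add: Let_def obs_of_def acts_of_def)
  hence "map_pmf info_emp (bind_pmf noise (\<lambda>w. map_pmf (ext_hist n f g hs w) (bernoulli_pmf q)))
      = bind_pmf (map_pmf E noise) K"
    unfolding map_bind_pmf pmf.map_comp o_def K_def by (simp add: bind_map_pmf)
  also have "map_pmf E noise = Tstep n S f noise (emp n s)"
    unfolding E_def by (rule law_emp_next_eq_Tstep) (use hs s_def in simp)
  finally show ?thesis unfolding info_emp_step_def K_def info_emp_def s_def by simp
qed

lemma bind_Tpow_info_emp_step:
  assumes "fst u \<noteq> []"
  shows "bind_pmf (Tm (y_of u) (x_of u)) (info_emp_step g u)
       = bind_pmf (obs_law (Tm (Suc (y_of u)) (x_of u)) (a_of u))
           (\<lambda>ob. map_pmf (Pair (info_step g u ob)) (Tm (y_of (info_step g u ob)) (x_of (info_step g u ob))))"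
proof -
  define G where "G = info_step g u"
  define T' where "T' = Tm (Suc (y_of u)) (x_of u)"
  define K where "K = (\<lambda>ob. map_pmf (Pair (G ob)) (Tm (snd (fhat (x_of u) (y_of u) ob)) (fst (fhat (x_of u) (y_of u) ob))))"
  have "bind_pmf (Tm (y_of u) (x_of u)) (info_emp_step g u)
      = bind_pmf (bernoulli_pmf q) (\<lambda>b. bind_pmf T' (\<lambda>m'. return_pmf (G (if a_of u \<and> b then Some m' else None), m')))"
    unfolding info_emp_step_def T'_def G_def map_pmf_def
    by (simp add: Tpow.simps(2) bind_assoc_pmf bind_commute_pmf[of _ "bernoulli_pmf q"])
  also have "\<dots> = bind_pmf (bernoulli_pmf q) (\<lambda>b. bind_pmf (if a_of u \<and> b then map_pmf Some T' else return_pmf None) K)"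
  proof (intro bind_pmf_cong refl)
    fix b
    show "bind_pmf T' (\<lambda>m'. return_pmf (G (if a_of u \<and> b then Some m' else None), m'))
        = bind_pmf (if a_of u \<and> b then map_pmf Some T' else return_pmf None) K"
    proof (cases "a_of u \<and> b")
      case True
      show ?thesis unfolding if_P[OF True] by (simp add: K_def fhat_def bind_map_pmf)
    next
      case False
      show ?thesis unfolding if_not_P[OF False] by (simp add: K_def fhat_def T'_def map_pmf_def bind_return_pmf)
    qed
  qed
  also have "\<dots> = bind_pmf (obs_law T' (a_of u)) K"
    unfolding obs_law_def by (simp add: bind_assoc_pmf)
  finally show ?thesis unfolding K_def G_def T'_def xy_info_step[OF assms] .
qed

lemma hist_law_info_emp:
  "map_pmf info_emp (hist_law g k)
     = bind_pmf (info_law g k) (\<lambda>u. map_pmf (Pair u) (Tm (y_of u) (x_of u)))"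
proof (induction k)
  case 0
  show ?case
    by (simp add: map_pmf_comp bind_map_pmf info_emp_def obs_of_def acts_of_def xy_single
        map_pmf_def[symmetric])
next
  case (Suc k)
  have "map_pmf info_emp (hist_law g (Suc k)) = bind_pmf (hist_law g k)
      (\<lambda>hs. map_pmf info_emp (bind_pmf noise (\<lambda>w. map_pmf (ext_hist n f g hs w) (bernoulli_pmf q))))"
    unfolding traj.simps by (rule map_bind_pmf)
  also have "\<dots> = bind_pmf (hist_law g k) (\<lambda>hs. info_emp_step g (fst (info_emp hs)) (snd (info_emp hs)))"
    using set_pmf_hist_law by (intro bind_pmf_cong refl info_emp_ext_hist) auto
  also have "\<dots> = bind_pmf (info_law g k) (\<lambda>u. bind_pmf (Tm (y_of u) (x_of u)) (info_emp_step g u))"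
    unfolding bind_map_pmf[of info_emp, symmetric, where g="\<lambda>z. info_emp_step g (fst z) (snd z)"] Suc.IH
    by (simp add: bind_assoc_pmf bind_map_pmf)
  also have "\<dots> = bind_pmf (info_law g (Suc k)) (\<lambda>u. map_pmf (Pair u) (Tm (y_of u) (x_of u)))"
    using set_pmf_info_law
    by (simp add: bind_assoc_pmf bind_map_pmf bind_Tpow_info_emp_step cong: bind_pmf_cong)
  finally show ?case .
qed

lemma belief_eq_Tpow:
  assumes hs: "hs \<in> set_pmf (hist_law g k)"
  shows "belief n (hist_law g k) hs = Tm (snd (xy (obs_of hs))) (fst (xy (obs_of hs)))"
proof -
  let ?P = "hist_law g k"
  let ?R = "bind_pmf (info_law g k) (\<lambda>u. map_pmf (Pair u) (Tm (y_of u) (x_of u)))"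
  define u0 where "u0 = (obs_of hs, acts_of hs)"
  define C where "C = {z :: (obs list \<times> bool list) \<times> mf.
    fst (fst z) = obs_of hs \<and> butlast (snd (fst z)) = butlast (acts_of hs)}"
  have C_vimage: "{hs'. obs_of hs' = obs_of hs \<and> butlast (acts_of hs') = butlast (acts_of hs)}
      = info_emp -` C"
    unfolding C_def info_emp_def by auto
  have "set_pmf ?P \<inter> info_emp -` C \<noteq> {}" using hs unfolding C_def info_emp_def by auto
  note cond_info_emp = cond_map_pmf[OF this]
  have belief: "belief n ?P hs = map_pmf snd (cond_pmf ?R C)"
    unfolding belief_def C_vimage hist_law_info_emp[symmetric] cond_info_emp
    by (simp add: map_pmf_comp info_emp_def)
  have info_emp_hs: "info_emp hs \<in> set_pmf ?R \<inter> C"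
    using hs unfolding hist_law_info_emp[symmetric] C_def info_emp_def by auto
  hence u0: "u0 \<in> set_pmf (info_law g k)" unfolding u0_def info_emp_def by auto
  have "C \<inter> set_pmf ?R = ({u0} \<times> UNIV) \<inter> set_pmf ?R"
  proof (intro equalityI subsetI)
    fix z assume z: "z \<in> C \<inter> set_pmf ?R"
    hence "fst z \<in> set_pmf (info_law g k)" "fst (fst z) = fst u0" unfolding C_def u0_def by auto
    hence "fst z = u0" using info_law_eq_if_fst_eq u0 by blast
    thus "z \<in> ({u0} \<times> UNIV) \<inter> set_pmf ?R" using z by (cases z) auto
  next
    fix z assume "z \<in> ({u0} \<times> UNIV) \<inter> set_pmf ?R"
    thus "z \<in> C \<inter> set_pmf ?R" unfolding C_def u0_def by auto
  qed
  hence "cond_pmf ?R C = cond_pmf ?R ({u0} \<times> UNIV)"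
    using info_emp_hs by (intro cond_pmf_cong_support) auto
  also have "\<dots> = map_pmf (Pair u0) (Tm (y_of u0) (x_of u0))"
    by (rule cond_pmf_bind_Pair[OF u0])
  finally show ?thesis
    using belief by (simp add: map_pmf_comp u0_def)
qed

lemma expected_cost_eq:
  "measure_pmf.expectation (hist_law g k)
     (\<lambda>hs. c (emp n (fst (last hs))) (h (belief n (hist_law g k) hs)) (snd (snd (last hs))))
   = measure_pmf.expectation (info_law g k) (\<lambda>u. cost (x_of u) (y_of u) (a_of u))"
proof -
  define F where "F = (\<lambda>z :: (obs list \<times> bool list) \<times> mf.
     c (snd z) (h (Tm (y_of (fst z)) (x_of (fst z)))) (a_of (fst z)))"
  have "measure_pmf.expectation (hist_law g k)
      (\<lambda>hs. c (emp n (fst (last hs))) (h (belief n (hist_law g k) hs)) (snd (snd (last hs))))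
     = measure_pmf.expectation (hist_law g k) (\<lambda>hs. F (info_emp hs))"
  proof (rule expectation_pmf_cong)
    fix hs assume hs: "hs \<in> set_pmf (hist_law g k)"
    hence "last (acts_of hs) = snd (snd (last hs))"
      using set_pmf_hist_law unfolding acts_of_def by (simp add: last_map)
    thus "c (emp n (fst (last hs))) (h (belief n (hist_law g k) hs)) (snd (snd (last hs)))
        = F (info_emp hs)"
      unfolding F_def info_emp_def belief_eq_Tpow[OF hs] by simp
  qed
  also have "\<dots> = measure_pmf.expectation (info_law g k)
      (\<lambda>u. measure_pmf.expectation (map_pmf (Pair u) (Tm (y_of u) (x_of u))) F)"
    unfolding integral_map_pmf[of info_emp, symmetric] hist_law_info_emp
    using set_pmf_info_law finite_set_pmf_Tpow
    by (intro expectation_bind_pmf_finite finite_set_pmf_info_law) auto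
  also have "\<dots> = measure_pmf.expectation (info_law g k) (\<lambda>u. cost (x_of u) (y_of u) (a_of u))"
    using set_pmf_info_law
    by (intro expectation_pmf_cong) (simp add: F_def chat_eq_expectation)
  finally show ?thesis .
qed

lemma expected_value_Suc:
  fixes V :: "mf \<Rightarrow> nat \<Rightarrow> real"
  shows "measure_pmf.expectation (info_law g (Suc k)) (\<lambda>u. V (x_of u) (y_of u))
   = measure_pmf.expectation (info_law g k) (\<lambda>u.
       measure_pmf.expectation (obs_law (Tm (Suc (y_of u)) (x_of u)) (a_of u))
         (\<lambda>ob. case_prod V (fhat (x_of u) (y_of u) ob)))"
proof -
  have "measure_pmf.expectation (info_law g (Suc k)) (\<lambda>u. V (x_of u) (y_of u))
      = measure_pmf.expectation (info_law g k) (\<lambda>u. measure_pmf.expectation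
          (map_pmf (info_step g u) (obs_law (Tm (Suc (y_of u)) (x_of u)) (a_of u)))
          (\<lambda>u. V (x_of u) (y_of u)))"
    unfolding info_law.simps using set_pmf_info_law finite_set_pmf_obs_law
    by (intro expectation_bind_pmf_finite finite_set_pmf_info_law) auto
  also have "\<dots> = measure_pmf.expectation (info_law g k) (\<lambda>u.
       measure_pmf.expectation (obs_law (Tm (Suc (y_of u)) (x_of u)) (a_of u))
         (\<lambda>ob. case_prod V (fhat (x_of u) (y_of u) ob)))"
    using set_pmf_info_law by (intro expectation_pmf_cong) (simp add: xy_info_step case_prod_beta)
  finally show ?thesis .
qed

subsection \<open>Verification of the greedy strategy\<close>

definition exp_cost :: "strategy \<Rightarrow> nat \<Rightarrow> real" where
  "exp_cost g k = measure_pmf.expectation (info_law g k) (\<lambda>u. cost (x_of u) (y_of u) (a_of u))"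

definition exp_value :: "(mf \<Rightarrow> nat \<Rightarrow> real) \<Rightarrow> strategy \<Rightarrow> nat \<Rightarrow> real" where
  "exp_value V g k = measure_pmf.expectation (info_law g k) (\<lambda>u. V (x_of u) (y_of u))"

lemma J_eq_suminf_exp_cost: "J n f init noise q h c \<gamma> g = (\<Sum>k. \<gamma> ^ k * exp_cost g k)"
  unfolding J_def expected_cost_eq exp_cost_def ..

lemma exp_cost_bounds: "0 \<le> exp_cost g k" "exp_cost g k \<le> cost_bound"
proof -
  have int: "integrable (info_law g k) F" for F :: "_ \<Rightarrow> real"
    by (rule integrable_measure_pmf_finite[OF finite_set_pmf_info_law])
  have "0 \<le> cost (x_of u) (y_of u) (a_of u) \<and> cost (x_of u) (y_of u) (a_of u) \<le> cost_bound"
    if "u \<in> set_pmf (info_law g k)" for u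
    using chat_bounds set_pmf_info_law[OF that] by blast
  thus "0 \<le> exp_cost g k" "exp_cost g k \<le> cost_bound" unfolding exp_cost_def
    by (auto intro!: measure_pmf.integral_ge_const measure_pmf.integral_le_const int AE_pmfI)
qed

lemma abs_exp_value_le:
  assumes "\<forall>x\<in>Mn n S. \<forall>y. \<bar>V x y\<bar> \<le> B"
  shows "\<bar>exp_value V g k\<bar> \<le> B"
  using abs_expectation_diff_le[OF finite_set_pmf_info_law,
      where F="\<lambda>u. V (x_of u) (y_of u)" and G="\<lambda>_. 0"]
    assms set_pmf_info_law
  unfolding exp_value_def by simp

lemma expectation_Qval_eq:
  "measure_pmf.expectation (info_law g k) (\<lambda>u. Q V (x_of u) (y_of u) (a_of u))
     = exp_cost g k + \<gamma> * exp_value V g (Suc k)"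
proof -
  have int: "integrable (info_law g k) F" for F :: "_ \<Rightarrow> real"
    by (rule integrable_measure_pmf_finite[OF finite_set_pmf_info_law])
  have "measure_pmf.expectation (info_law g k) (\<lambda>u. Q V (x_of u) (y_of u) (a_of u))
      = measure_pmf.expectation (info_law g k) (\<lambda>u. cost (x_of u) (y_of u) (a_of u)
          + \<gamma> * measure_pmf.expectation (obs_law (Tm (Suc (y_of u)) (x_of u)) (a_of u))
                 (\<lambda>ob. case_prod V (fhat (x_of u) (y_of u) ob)))"
    using set_pmf_info_law by (intro expectation_pmf_cong) (simp add: Qval_eq_expectation)
  thus ?thesis
    unfolding exp_cost_def exp_value_def expected_value_Suc by (simp add: int)
qed

lemma exp_value_le:
  assumes "bellman n S f noise q h c \<gamma> V"
  shows "exp_value V g k \<le> exp_cost g k + \<gamma> * exp_value V g (Suc k)"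
proof -
  have "V x y \<le> Q V x y a" if "x \<in> Mn n S" for x y a
    using assms that unfolding bellman_def by (cases a) auto
  hence "exp_value V g k
      \<le> measure_pmf.expectation (info_law g k) (\<lambda>u. Q V (x_of u) (y_of u) (a_of u))"
    unfolding exp_value_def using set_pmf_info_law
    by (intro integral_mono_AE integrable_measure_pmf_finite finite_set_pmf_info_law AE_pmfI) auto
  thus ?thesis by (simp only: expectation_Qval_eq)
qed

lemma exp_value_eq:
  assumes greedy: "\<forall>os as. os \<noteq> [] \<and> fst (xy os) \<in> Mn n S \<longrightarrow>
      V (fst (xy os)) (snd (xy os)) = Q V (fst (xy os)) (snd (xy os)) (gstar (length os) os as)"
  shows "exp_value V gstar k = exp_cost gstar k + \<gamma> * exp_value V gstar (Suc k)"
proof -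
  have "V (x_of u) (y_of u) = Q V (x_of u) (y_of u) (a_of u)" if "u \<in> set_pmf (info_law gstar k)" for u
  proof -
    have "fst u \<noteq> [] \<and> x_of u \<in> Mn n S"
      and "a_of u = gstar (length (fst u)) (fst u) (butlast (snd u))"
      using set_pmf_info_law[OF that] by auto
    thus ?thesis using greedy[rule_format, of "fst u" "butlast (snd u)"] by simp
  qed
  hence "exp_value V gstar k
      = measure_pmf.expectation (info_law gstar k) (\<lambda>u. Q V (x_of u) (y_of u) (a_of u))"
    unfolding exp_value_def by (rule expectation_pmf_cong)
  thus ?thesis by (simp only: expectation_Qval_eq)
qed

lemma exp_value_0: "exp_value V g 0 = measure_pmf.expectation init (\<lambda>s. V (emp n s) 0)"
  unfolding exp_value_def by (simp add: xy_single)

lemma greedy_optimal: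
  assumes "bounded_V n S V" and "bellman n S f noise q h c \<gamma> V"
    and greedy: "\<forall>os as. os \<noteq> [] \<and> fst (xy os) \<in> Mn n S \<longrightarrow>
      V (fst (xy os)) (snd (xy os)) = Q V (fst (xy os)) (snd (xy os)) (gstar (length os) os as)"
  shows "J n f init noise q h c \<gamma> gstar \<le> J n f init noise q h c \<gamma> g"
proof -
  obtain B where "\<forall>x\<in>Mn n S. \<forall>y. \<bar>V x y\<bar> \<le> B" using assms(1) unfolding bounded_V_def by blast
  hence tendsto: "(\<lambda>N. (\<Sum>k<N. \<gamma> ^ k * exp_cost g' k) + \<gamma> ^ N * exp_value V g' N)
      \<longlonglongrightarrow> J n f init noise q h c \<gamma> g'" for g'
    unfolding J_eq_suminf_exp_cost using \<gamma>_range
    by (intro discounted_unroll_tendsto[where B'=cost_bound] abs_exp_value_le exp_cost_bounds) auto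
  have "exp_value V g 0 \<le> J n f init noise q h c \<gamma> g"
    using discounted_unroll_le[where D="exp_value V g" and C="exp_cost g",
        OF \<gamma>_range(1) exp_value_le[OF assms(2)]]
    by (intro LIMSEQ_le_const[OF tendsto]) blast
  moreover have "(\<lambda>N. exp_value V gstar 0) \<longlonglongrightarrow> J n f init noise q h c \<gamma> gstar"
    using tendsto[of gstar] unfolding discounted_unroll_eq[where D="exp_value V gstar" and C="exp_cost gstar",
        OF exp_value_eq[where V=V and gstar=gstar, OF greedy], symmetric] .
  hence "J n f init noise q h c \<gamma> gstar = exp_value V gstar 0"
    by (simp add: LIMSEQ_const_iff)
  ultimately show ?thesis by (simp add: exp_value_0)
qed

end

theorem theorem3:
  fixes n :: nat and S W :: "real set"
    and f :: "real \<Rightarrow> mf \<Rightarrow> real \<Rightarrow> real"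
    and init noise :: "(nat \<Rightarrow> real) pmf"
    and q \<gamma> :: real
    and h :: "mf pmf \<Rightarrow> mf"
    and c :: "mf \<Rightarrow> mf \<Rightarrow> bool \<Rightarrow> real"
  assumes n_pos: "n \<ge> 1"
    and S_fin: "finite S" and S_ne: "S \<noteq> {}"
    and W_fin: "finite W"
    and f_range: "\<forall>s\<in>S. \<forall>m\<in>Mn n S. \<forall>w\<in>W. f s m w \<in> S"
    and init_range: "set_pmf init \<subseteq> {s. \<forall>i<n. s i \<in> S}"
    and noise_range: "set_pmf noise \<subseteq> {w. \<forall>i<n. w i \<in> W}"
    and exch: "exchangeable n noise"
    and q_range: "0 \<le> q" "q \<le> 1"
    and \<gamma>_range: "0 < \<gamma>" "\<gamma> < 1"
    and h_range: "\<forall>p. set_pmf p \<subseteq> Mn n S \<longrightarrow> h p \<in> Mn n S"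
    and c_nonneg: "\<forall>m\<in>Mn n S. \<forall>m'\<in>Mn n S. \<forall>a. 0 \<le> c m m' a"
  shows "(\<exists>V. bounded_V n S V \<and> bellman n S f noise q h c \<gamma> V)
       \<and> (\<forall>V gstar. bounded_V n S V \<and> bellman n S f noise q h c \<gamma> V
            \<and> (\<forall>os as. os \<noteq> [] \<and> fst (xy os) \<in> Mn n S \<longrightarrow>
                  V (fst (xy os)) (snd (xy os))
                  = Qval n S f noise q h c \<gamma> V (fst (xy os)) (snd (xy os)) (gstar (length os) os as))
          \<longrightarrow> (\<forall>g. J n f init noise q h c \<gamma> gstar \<le> J n f init noise q h c \<gamma> g))"
proof -
  interpret mean_field_model n S W f init noise q \<gamma> h c
    using assms by unfold_locales auto
  show ?thesis
  proof (intro conjI allI impI)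
    show "\<exists>V. bounded_V n S V \<and> bellman n S f noise q h c \<gamma> V"
      using bounded_value_lim bellman_value_lim by blast
  next
    fix V :: "mf \<Rightarrow> nat \<Rightarrow> real" and gstar g :: strategy
    assume "bounded_V n S V \<and> bellman n S f noise q h c \<gamma> V
      \<and> (\<forall>os as. os \<noteq> [] \<and> fst (xy os) \<in> Mn n S \<longrightarrow>
            V (fst (xy os)) (snd (xy os)) = Q V (fst (xy os)) (snd (xy os)) (gstar (length os) os as))"
    thus "J n f init noise q h c \<gamma> gstar \<le> J n f init noise q h c \<gamma> g"
      by (elim conjE) (rule greedy_optimal)
  qed
qed

end
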